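(* Let $f:\mathbb{R}^n\to\mathbb{R}$ be continuously differentiable and bounded below with $\nabla f$ Lipschitz continuous with constant $L(f)$, let $s$ be an integer with $0<s<n$, and let $\{\mathbf{x}^k\}_{k\ge0}$ be a sequence generated by the IHT method with constant $L>L(f)$. Then any accumulation point of $\{\mathbf{x}^k\}_{k\ge0}$ is an $L$-stationary point of the problem (P): minimize $f(\mathbf{x})$ subject to $\|\mathbf{x}\|_0\le s$.
   Context: $C_s=\{\mathbf{x}\in\mathbb{R}^n:\|\mathbf{x}\|_0\le s\}$ where $\|\mathbf{x}\|_0$ is the number of nonzero components. $P_{C_s}(\mathbf{y})=\operatorname{argmin}_{\mathbf{x}\in C_s}\|\mathbf{x}-\mathbf{y}\|^2$ (possibly multi-valued). The IHT method with constant $L$: choose $\mathbf{x}^0\in C_s$ and for $k=0,1,2,\dots$ pick any $\mathbf{x}^{k+1}\in P_{C_s}\!\left(\mathbf{x}^k-\frac1L\nabla f(\mathbf{x}^k)\right)$. A point $\mathbf{x}^*\in C_s$ is $L$-stationary for (P) if $\mathbf{x}^*\in P_{C_s}\!\left(\mathbf{x}^*-\frac1L\nabla f(\mathbf{x}^* )\right)$. "$\nabla f$ Lipschitz with constant $L(f)$" means $\|\nabla f(\mathbf{x})-\nabla f(\mathbf{y})\|\le L(f)\|\mathbf{x}-\mathbf{y}\|$ for all $\mathbf{x},\mathbf{y}$. *)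

theory Defs
  imports "HOL-Analysis.Analysis"
begin

definition l0 :: "real^'n \<Rightarrow> nat" where
  "l0 x = card {i. x $ i \<noteq> 0}"

definition sparse_set :: "nat \<Rightarrow> (real^'n) set" where
  "sparse_set s = {x. l0 x \<le> s}"

definition proj_set :: "(real^'n) set \<Rightarrow> real^'n \<Rightarrow> (real^'n) set" where
  "proj_set C y = {x \<in> C. \<forall>z\<in>C. (norm (x - y))\<^sup>2 \<le> (norm (z - y))\<^sup>2}"

definition IHT_seq :: "nat \<Rightarrow> real \<Rightarrow> (real^'n \<Rightarrow> real^'n) \<Rightarrow> (nat \<Rightarrow> real^'n) \<Rightarrow> bool" where
  "IHT_seq s L g x \<longleftrightarrow> x 0 \<in> sparse_set s \<and>
     (\<forall>k. x (Suc k) \<in> proj_set (sparse_set s) (x k - (1 / L) *\<^sub>R g (x k)))"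

definition L_stationary :: "nat \<Rightarrow> real \<Rightarrow> (real^'n \<Rightarrow> real^'n) \<Rightarrow> real^'n \<Rightarrow> bool" where
  "L_stationary s L g xs \<longleftrightarrow> xs \<in> sparse_set s \<and>
     xs \<in> proj_set (sparse_set s) (xs - (1 / L) *\<^sub>R g xs)"

end

theory Submission
  imports Defs
begin

text \<open>An IHT step with \<open>L > L(f)\<close> decreases \<open>f\<close> by at least \<open>(L - L(f))/2\<close> times the squared
  step length: comparing the projection with the feasible old iterate bounds the linear term of
  the descent lemma by \<open>-L/2\<close> times that squared length. As \<open>f\<close> is bounded below, the squared step
  lengths are summable, so consecutive iterates merge; along a subsequence converging to
  \<open>x\<^sup>*\<close> both the iterate and the point being projected converge, and the projection inequality
  passes to the limit because \<open>C\<^sub>s\<close> is closed and \<open>\<nabla>f\<close> is continuous.\<close>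

lemma descent_lemma:
  fixes f :: "'a::real_inner \<Rightarrow> real" and g :: "'a \<Rightarrow> 'a"
  assumes grad: "\<And>y. (f has_derivative (\<lambda>h. g y \<bullet> h)) (at y)"
    and lip: "\<And>y z. norm (g y - g z) \<le> Lf * norm (y - z)"
  shows "f y \<le> f x + g x \<bullet> (y - x) + Lf / 2 * (norm (y - x))\<^sup>2"
proof -
  define d where "d = y - x"
  define \<psi> where "\<psi> t = f (x + t *\<^sub>R d) - t * (g x \<bullet> d) - Lf / 2 * t\<^sup>2 * (norm d)\<^sup>2" for t
  have deriv_\<psi>: "(\<psi> has_real_derivative (g (x + t *\<^sub>R d) \<bullet> d - g x \<bullet> d - Lf * t * (norm d)\<^sup>2)) (at t)"
    for t
  proof -
    have line: "((\<lambda>t. x + t *\<^sub>R d) has_derivative (\<lambda>h. h *\<^sub>R d)) (at t)"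
      by (auto intro!: derivative_eq_intros)
    have "((\<lambda>t. f (x + t *\<^sub>R d)) has_derivative (\<lambda>h. h * (g (x + t *\<^sub>R d) \<bullet> d))) (at t)"
      using has_derivative_compose[OF line grad] by (simp add: mult.commute)
    then have "((\<lambda>t. f (x + t *\<^sub>R d)) has_real_derivative (g (x + t *\<^sub>R d) \<bullet> d)) (at t)"
      by (simp add: has_field_derivative_def mult_commute_abs)
    then show ?thesis
      unfolding \<psi>_def by (auto intro!: derivative_eq_intros)
  qed
  have deriv_nonpos: "g (x + t *\<^sub>R d) \<bullet> d - g x \<bullet> d - Lf * t * (norm d)\<^sup>2 \<le> 0" if "0 \<le> t" for t
  proof -
    have "g (x + t *\<^sub>R d) \<bullet> d - g x \<bullet> d = (g (x + t *\<^sub>R d) - g x) \<bullet> d"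
      by (simp add: inner_diff_left)
    also have "\<dots> \<le> norm (g (x + t *\<^sub>R d) - g x) * norm d"
      by (rule norm_cauchy_schwarz)
    also have "\<dots> \<le> Lf * norm (t *\<^sub>R d) * norm d"
      using lip[of "x + t *\<^sub>R d" x] by (simp add: mult_right_mono)
    also have "\<dots> = Lf * t * (norm d)\<^sup>2"
      using that by (simp add: power2_eq_square)
    finally show ?thesis by simp
  qed
  have "\<psi> 1 \<le> \<psi> 0"
  proof (rule DERIV_nonpos_imp_nonincreasing[of 0 1])
    fix t :: real
    assume "0 \<le> t"
    then show "\<exists>D. (\<psi> has_real_derivative D) (at t) \<and> D \<le> 0"
      using deriv_\<psi> deriv_nonpos by blast
  qed simp
  then show ?thesis by (simp add: \<psi>_def d_def)
qed

lemma lipschitz_constant_nonneg: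
  assumes "norm (g y - g z) \<le> Lf * norm (y - z)" and "y \<noteq> z"
  shows "0 \<le> Lf"
  using assms norm_ge_zero[of "g y - g z"] by (smt (verit) zero_le_mult_iff zero_less_norm_iff right_minus_eq)

lemma proj_gradient_step_decrease:
  fixes f :: "real^'n \<Rightarrow> real" and g :: "real^'n \<Rightarrow> real^'n"
  assumes grad: "\<And>y. (f has_derivative (\<lambda>h. g y \<bullet> h)) (at y)"
    and lip: "\<And>y z. norm (g y - g z) \<le> Lf * norm (y - z)"
    and "0 < L" and "x \<in> C" and step: "x' \<in> proj_set C (x - (1 / L) *\<^sub>R g x)"
  shows "f x' \<le> f x - (L - Lf) / 2 * (norm (x' - x))\<^sup>2"
proof -
  define d where "d = x' - x"
  define a where "a = (1 / L) *\<^sub>R g x"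
  have "(norm (d + a))\<^sup>2 \<le> (norm a)\<^sup>2"
    using step \<open>x \<in> C\<close> unfolding proj_set_def by (auto simp: d_def a_def algebra_simps)
  moreover have "(norm (d + a))\<^sup>2 = (norm d)\<^sup>2 + 2 * (a \<bullet> d) + (norm a)\<^sup>2"
    by (simp add: power2_norm_eq_inner inner_add_left inner_add_right inner_commute)
  ultimately have "2 * (a \<bullet> d) \<le> - (norm d)\<^sup>2"
    by linarith
  then have "L * (2 * (a \<bullet> d)) \<le> L * - (norm d)\<^sup>2"
    using \<open>0 < L\<close> by (intro mult_left_mono) auto
  moreover have "L * (a \<bullet> d) = g x \<bullet> d"
    using \<open>0 < L\<close> by (simp add: a_def)
  ultimately have "g x \<bullet> d \<le> - L / 2 * (norm d)\<^sup>2"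
    by (simp add: algebra_simps)
  then show ?thesis
    using descent_lemma[OF grad lip, of x' x] by (simp add: d_def field_simps)
qed

lemma sufficient_decrease_steps_tendsto_zero:
  fixes x :: "nat \<Rightarrow> 'a::real_normed_vector"
  assumes "0 < c" and bdd: "\<And>k. b \<le> f (x k)"
    and decrease: "\<And>k. f (x (Suc k)) \<le> f (x k) - c * (norm (x (Suc k) - x k))\<^sup>2"
  shows "(\<lambda>k. x (Suc k) - x k) \<longlonglongrightarrow> 0"
proof -
  let ?step = "\<lambda>k. (norm (x (Suc k) - x k))\<^sup>2"
  have telescope: "c * (\<Sum>k<N. ?step k) \<le> f (x 0) - f (x N)" for N
  proof (induction N)
    case (Suc N)
    then show ?case using decrease[of N] by (simp add: algebra_simps)
  qed simp
  have "(\<Sum>k<N. ?step k) \<le> (f (x 0) - b) / c" for N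
    using telescope[of N] bdd[of N] \<open>0 < c\<close> by (simp add: field_simps)
  then have "summable ?step"
    by (intro summableI_nonneg_bounded) auto
  then have "(\<lambda>k. sqrt (?step k)) \<longlonglongrightarrow> sqrt 0"
    by (intro tendsto_real_sqrt summable_LIMSEQ_zero)
  then have "(\<lambda>k. norm (x (Suc k) - x k)) \<longlonglongrightarrow> 0"
    by simp
  then show ?thesis
    by (simp add: tendsto_norm_zero_iff)
qed

lemma closed_sparse_set: "closed (sparse_set s :: (real^'n) set)"
proof (unfold closed_sequential_limits, intro allI impI, elim conjE)
  fix y :: "nat \<Rightarrow> real^'n" and y0
  assume sparse: "\<forall>k. y k \<in> sparse_set s" and lim: "y \<longlonglongrightarrow> y0"
  define S where "S = {i. y0 $ i \<noteq> 0}"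
  have "\<forall>i\<in>S. eventually (\<lambda>k. y k $ i \<noteq> 0) sequentially"
    using lim by (auto simp: S_def intro: tendsto_imp_eventually_ne tendsto_vec_nth)
  from eventually_ball_finite[OF _ this] obtain k where "\<forall>i\<in>S. y k $ i \<noteq> 0"
    by (auto simp: eventually_sequentially)
  then have "card S \<le> card {i. y k $ i \<noteq> 0}"
    by (intro card_mono) auto
  also have "\<dots> \<le> s"
    using sparse by (simp add: sparse_set_def l0_def)
  finally show "y0 \<in> sparse_set s"
    by (simp add: sparse_set_def l0_def S_def)
qed

lemma proj_set_limit:
  assumes "closed C" and proj: "\<And>k. y k \<in> proj_set C (w k)"
    and "y \<longlonglongrightarrow> y0" and "w \<longlonglongrightarrow> w0"
  shows "y0 \<in> proj_set C w0"
  unfolding proj_set_def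
proof (intro CollectI conjI ballI)
  show "y0 \<in> C"
    using closed_sequentially[OF \<open>closed C\<close> _ \<open>y \<longlonglongrightarrow> y0\<close>] proj by (auto simp: proj_set_def)
  show "(norm (y0 - w0))\<^sup>2 \<le> (norm (z - w0))\<^sup>2" if "z \<in> C" for z
  proof (rule LIMSEQ_le)
    show "(\<lambda>k. (norm (y k - w k))\<^sup>2) \<longlonglongrightarrow> (norm (y0 - w0))\<^sup>2"
      and "(\<lambda>k. (norm (z - w k))\<^sup>2) \<longlonglongrightarrow> (norm (z - w0))\<^sup>2"
      using \<open>y \<longlonglongrightarrow> y0\<close> \<open>w \<longlonglongrightarrow> w0\<close> by (auto intro!: tendsto_intros)
    show "\<exists>N. \<forall>k\<ge>N. (norm (y k - w k))\<^sup>2 \<le> (norm (z - w k))\<^sup>2"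
      using proj \<open>z \<in> C\<close> by (auto simp: proj_set_def)
  qed
qed

theorem theorem3p1:
  fixes f :: "real^'n \<Rightarrow> real" and g :: "real^'n \<Rightarrow> real^'n"
    and s :: nat and Lf L :: real and x :: "nat \<Rightarrow> real^'n" and xstar :: "real^'n"
  assumes grad: "\<And>y. (f has_derivative (\<lambda>h. g y \<bullet> h)) (at y)"
    and grad_cont: "continuous_on UNIV g"
    and bdd_below: "\<exists>c. \<forall>y. c \<le> f y"
    and lipschitz: "\<And>y z. norm (g y - g z) \<le> Lf * norm (y - z)"
    and s_pos: "0 < s" and s_lt: "s < CARD('n)"
    and L_gt: "L > Lf"
    and iht: "IHT_seq s L g x"
    and accum: "\<exists>r. strict_mono r \<and> (x \<circ> r) \<longlonglongrightarrow> xstar"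
  shows "L_stationary s L g xstar"
proof -
  have "0 \<le> Lf"
    by (rule lipschitz_constant_nonneg[OF lipschitz[of 0 "axis undefined 1"]]) (simp add: axis_eq_0_iff)
  with L_gt have "0 < L" by simp
  define w where "w k = x k - (1 / L) *\<^sub>R g (x k)" for k
  have step: "x (Suc k) \<in> proj_set (sparse_set s) (w k)" for k
    using iht by (simp add: IHT_seq_def w_def)
  have sparse: "x k \<in> sparse_set s" for k
    using iht step[of "k - 1"] by (cases k) (auto simp: IHT_seq_def proj_set_def)
  have "f (x (Suc k)) \<le> f (x k) - (L - Lf) / 2 * (norm (x (Suc k) - x k))\<^sup>2" for k
    using proj_gradient_step_decrease[OF grad lipschitz \<open>0 < L\<close> sparse step[unfolded w_def]] .
  moreover obtain b where "\<And>y. b \<le> f y" using bdd_below by auto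
  ultimately have "(\<lambda>k. x (Suc k) - x k) \<longlonglongrightarrow> 0"
    using L_gt by (intro sufficient_decrease_steps_tendsto_zero[of "(L - Lf) / 2" b f]) auto
  obtain r where "strict_mono r" and lim: "(\<lambda>k. x (r k)) \<longlonglongrightarrow> xstar"
    using accum by (auto simp: o_def)
  have "(\<lambda>k. x (Suc (r k)) - x (r k)) \<longlonglongrightarrow> 0"
    using LIMSEQ_subseq_LIMSEQ[OF \<open>(\<lambda>k. x (Suc k) - x k) \<longlonglongrightarrow> 0\<close> \<open>strict_mono r\<close>]
    by (simp add: o_def)
  from tendsto_add[OF lim this] have next_lim: "(\<lambda>k. x (Suc (r k))) \<longlonglongrightarrow> xstar"
    by (simp only: add_0_right add.commute[of "x (r _)"] diff_add_cancel)
  have w_lim: "(\<lambda>k. w (r k)) \<longlonglongrightarrow> xstar - (1 / L) *\<^sub>R g xstar"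
    unfolding w_def
    using isCont_tendsto_compose[OF _ lim, of g] grad_cont
    by (intro tendsto_intros lim) (simp add: continuous_on_eq_continuous_at)
  have "xstar \<in> proj_set (sparse_set s) (xstar - (1 / L) *\<^sub>R g xstar)"
    using proj_set_limit[OF closed_sparse_set step next_lim w_lim] .
  then show ?thesis
    by (simp add: L_stationary_def proj_set_def)
qed

end
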